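(* Let $f:\mathbb{R}^n\to(-\infty,+\infty]$ be a proper closed convex function, let $\mathcal{M}$ be a $C^1$-smooth embedded submanifold of $\mathbb{R}^n$ containing $\bar x$ (with the induced Riemannian metric), suppose $f$ is $C^1$-partly smooth around $\bar x$ relative to $\mathcal{M}$ and $g_{\mathcal{U}}(\bar x)\in\operatorname{ri}\partial f(\bar x)$. Then for all $x\in\mathcal{M}$ near $\bar x$, the Riemannian gradient of $f|_{\mathcal M}$ satisfies $\nabla_{\mathcal{M}}f(x)=g_{\mathcal{U}}(x)$.
   Context: Partial smoothness: $f$ is partly smooth at a point $x\in\mathcal M$ relative to a $C^p$ manifold $\mathcal{M}$ (for all subgradients) if: (Regularity) $\hat\partial f(z)=\partial f(z)\neq\varnothing$ for all $z\in\mathcal{M}$ near $x$; (Restricted smoothness) $f|_{\mathcal{M}}$ is $C^p$-smooth around $x$; (Sharpness) $\operatorname{par}\partial f(x)$ (the subspace parallel to the affine hull of $\partial f(x)$) equals the normal space $N_x\mathcal{M}$; (Inner semicontinuity) for every $y\in\partial f(x)$ and every sequence $x_r\to x$ in $\mathcal{M}$ there exist $y_r\in\partial f(x_r)$ with $y_r\to y$. "$C^1$-partly smooth around $\bar x$ relative to $\mathcal{M}$" means this holds with $p=1$ at every point of $\mathcal M$ near $\bar x$. For $g\in\partial f(x)$, $\mathcal{V}(x)=\operatorname{lin}(\partial f(x)-g)$, $\mathcal{U}(x)=\mathcal{V}(x)^\perp$, and the $\mathcal{U}$-gradient is $g_{\mathcal U}(x)=P_{\mathcal{U}(x)}(g)$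 (independent of $g\in\partial f(x)$). The Riemannian gradient $\nabla_{\mathcal M}f(x)\in T_x\mathcal M$ is $P_{T_x\mathcal M}\nabla\tilde f(x)$ for any local smooth extension $\tilde f$ of $f|_{\mathcal M}$. *)

theory Defs
  imports "HOL-Analysis.Analysis" "HOL-Library.Extended_Real"
begin

definition epigraph :: "('a \<Rightarrow> ereal) \<Rightarrow> ('a \<times> real) set" where
  "epigraph f = {(x, r). f x \<le> ereal r}"

definition proper_fun :: "('a \<Rightarrow> ereal) \<Rightarrow> bool" where
  "proper_fun f \<longleftrightarrow> (\<forall>x. f x \<noteq> -\<infinity>) \<and> (\<exists>x. f x \<noteq> \<infinity>)"

definition closed_fun :: "('a::real_normed_vector \<Rightarrow> ereal) \<Rightarrow> bool" where
  "closed_fun f \<longleftrightarrow> closed (epigraph f)"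

definition convex_fun :: "('a::real_vector \<Rightarrow> ereal) \<Rightarrow> bool" where
  "convex_fun f \<longleftrightarrow> convex (epigraph f)"

definition frechet_subdiff :: "('a::euclidean_space \<Rightarrow> ereal) \<Rightarrow> 'a \<Rightarrow> 'a set" where
  "frechet_subdiff f x = {y. \<bar>f x\<bar> \<noteq> \<infinity> \<and>
     (\<forall>e>0. \<exists>d>0. \<forall>z. norm (z - x) < d \<longrightarrow>
        f z \<ge> ereal (real_of_ereal (f x) + y \<bullet> (z - x) - e * norm (z - x)))}"

definition limiting_subdiff :: "('a::euclidean_space \<Rightarrow> ereal) \<Rightarrow> 'a \<Rightarrow> 'a set" where
  "limiting_subdiff f x = {y. \<bar>f x\<bar> \<noteq> \<infinity> \<and>
     (\<exists>xs ys. xs \<longlonglongrightarrow> x \<and> (\<lambda>k. f (xs k)) \<longlonglongrightarrow> f x \<and>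
        (\<forall>k. ys k \<in> frechet_subdiff f (xs k)) \<and> ys \<longlonglongrightarrow> y)}"

definition C1_on :: "'a::real_normed_vector set \<Rightarrow> ('a \<Rightarrow> 'b::real_normed_vector) \<Rightarrow> bool" where
  "C1_on U \<phi> \<longleftrightarrow> (\<exists>D :: 'a \<Rightarrow> 'a \<Rightarrow>\<^sub>L 'b.
      (\<forall>z\<in>U. (\<phi> has_derivative blinfun_apply (D z)) (at z)) \<and> continuous_on U D)"

definition C1_submanifold :: "'a::euclidean_space set \<Rightarrow> bool" where
  "C1_submanifold M \<longleftrightarrow> (\<forall>x\<in>M. \<exists>U V \<phi> \<psi> L.
      open U \<and> x \<in> U \<and> open V \<and> subspace L \<and>
      C1_on U (\<phi> :: 'a \<Rightarrow> 'a) \<and> C1_on V (\<psi> :: 'a \<Rightarrow> 'a) \<and> \<phi> ` U = V \<and>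
      (\<forall>z\<in>U. \<psi> (\<phi> z) = z) \<and> (\<forall>w\<in>V. \<phi> (\<psi> w) = w) \<and>
      \<phi> ` (M \<inter> U) = L \<inter> V)"

definition tangent_space :: "'a::euclidean_space set \<Rightarrow> 'a \<Rightarrow> 'a set" where
  "tangent_space M x = {v. \<exists>\<gamma> e. e > 0 \<and> \<gamma> 0 = x \<and> (\<forall>t. \<bar>t\<bar> < e \<longrightarrow> \<gamma> t \<in> M) \<and>
       (\<gamma> has_vector_derivative v) (at 0)}"

definition normal_space :: "'a::euclidean_space set \<Rightarrow> 'a \<Rightarrow> 'a set" where
  "normal_space M x = orthogonal_comp (tangent_space M x)"

text \<open>Subspace parallel to the affine hull of a set.\<close>
definition par :: "'a::euclidean_space set \<Rightarrow> 'a set" where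
  "par S = span {a - b | a b. a \<in> S \<and> b \<in> S}"

definition partly_smooth_at ::
  "('a::euclidean_space \<Rightarrow> ereal) \<Rightarrow> 'a set \<Rightarrow> 'a \<Rightarrow> bool" where
  "partly_smooth_at f M x \<longleftrightarrow>
     x \<in> M \<and>
     \<comment> \<open>Regularity\<close>
     (\<exists>W. open W \<and> x \<in> W \<and> (\<forall>z\<in>M \<inter> W.
         frechet_subdiff f z = limiting_subdiff f z \<and> limiting_subdiff f z \<noteq> {})) \<and>
     \<comment> \<open>Restricted smoothness (p = 1)\<close>
     (\<exists>U h. open U \<and> x \<in> U \<and> C1_on U (h :: 'a \<Rightarrow> real) \<and>
         (\<forall>z\<in>M \<inter> U. f z = ereal (h z))) \<and>
     \<comment> \<open>Sharpness\<close>
     par (limiting_subdiff f x) = normal_space M x \<and>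
     \<comment> \<open>Inner semicontinuity\<close>
     (\<forall>y\<in>limiting_subdiff f x. \<forall>xs. (\<forall>r. xs r \<in> M) \<longrightarrow> xs \<longlonglongrightarrow> x \<longrightarrow>
        (\<exists>ys. (\<forall>\<^sub>F r in sequentially. ys r \<in> limiting_subdiff f (xs r)) \<and> ys \<longlonglongrightarrow> y))"

definition C1_partly_smooth_around ::
  "('a::euclidean_space \<Rightarrow> ereal) \<Rightarrow> 'a set \<Rightarrow> 'a \<Rightarrow> bool" where
  "C1_partly_smooth_around f M xbar \<longleftrightarrow>
     (\<exists>W. open W \<and> xbar \<in> W \<and> (\<forall>x\<in>M \<inter> W. partly_smooth_at f M x))"

definition Vsp :: "('a::euclidean_space \<Rightarrow> ereal) \<Rightarrow> 'a \<Rightarrow> 'a set" where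
  "Vsp f x = span ((\<lambda>y. y - (SOME g. g \<in> limiting_subdiff f x)) ` limiting_subdiff f x)"

definition Usp :: "('a::euclidean_space \<Rightarrow> ereal) \<Rightarrow> 'a \<Rightarrow> 'a set" where
  "Usp f x = orthogonal_comp (Vsp f x)"

definition U_gradient :: "('a::euclidean_space \<Rightarrow> ereal) \<Rightarrow> 'a \<Rightarrow> 'a" where
  "U_gradient f x = closest_point (Usp f x) (SOME g. g \<in> limiting_subdiff f x)"

text \<open>gr is the Riemannian gradient of f restricted to M at x when gr is the
  tangent projection of the Euclidean gradient of some local C^1 extension.
  The conclusion below quantifies over every such extension.\<close>
definition riemannian_gradient_via ::
  "('a::euclidean_space \<Rightarrow> ereal) \<Rightarrow> 'a set \<Rightarrow> 'a \<Rightarrow> 'a set \<Rightarrow> ('a \<Rightarrow> real) \<Rightarrow> 'a \<Rightarrow> bool" where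
  "riemannian_gradient_via f M x U h gr \<longleftrightarrow>
     open U \<and> x \<in> U \<and> C1_on U h \<and> (\<forall>z\<in>M \<inter> U. f z = ereal (h z)) \<and>
     (\<exists>g. (h has_derivative (\<lambda>v. g \<bullet> v)) (at x) \<and> gr = closest_point (tangent_space M x) g)"

end

theory Submission
  imports Defs
begin

text \<open>
  Fix \<open>x \<in> M\<close> near \<open>xbar\<close> and \<open>y \<in> \<partial>f(x)\<close>; by regularity \<open>y\<close> is a Frechet subgradient.
  If \<open>h\<close> is a \<open>C\<^sup>1\<close> extension of \<open>f\<close> restricted to \<open>M\<close> with gradient \<open>g\<close> at \<open>x\<close>, then along
  every curve in \<open>M\<close> through \<open>x\<close> with velocity \<open>v\<close> the Frechet inequality for \<open>y\<close> gives
  \<open>y \<bullet> v \<le> g \<bullet> v\<close>; applied to \<open>\<plusminus>v\<close> this shows \<open>g - y \<perp> T\<^sub>xM\<close>, where \<open>T\<^sub>xM\<close> is a linear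
  subspace because a straightening chart maps it onto the model subspace.
  Sharpness gives \<open>\<U>(x) = (par \<partial>f(x))\<^sup>\<bottom> = (N\<^sub>xM)\<^sup>\<bottom> = T\<^sub>xM\<close>, so the
  projections of \<open>g\<close> and \<open>y\<close> onto \<open>T\<^sub>xM\<close> agree, i.e. \<open>\<nabla>\<^sub>Mf(x) = g\<^sub>\<U>(x)\<close>.
\<close>

lemma has_vector_derivative_imp_difference_quotient:
  fixes \<gamma> :: "real \<Rightarrow> 'b::real_normed_vector"
  assumes "(\<gamma> has_vector_derivative v) (at a)"
  shows "((\<lambda>t. (\<gamma> t - \<gamma> a) /\<^sub>R (t - a)) \<longlongrightarrow> v) (at a)"
proof -
  have "((\<lambda>t. norm (\<gamma> t - \<gamma> a - (t - a) *\<^sub>R v) / norm (t - a)) \<longlongrightarrow> 0) (at a)"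
    using assms by (simp add: has_vector_derivative_def has_derivative_iff_norm)
  moreover have "\<forall>\<^sub>F t in at a. norm (\<gamma> t - \<gamma> a - (t - a) *\<^sub>R v) / norm (t - a)
      = norm ((\<gamma> t - \<gamma> a) /\<^sub>R (t - a) - v)"
  proof (rule eventually_at_filter[THEN iffD2, OF always_eventually], intro allI impI)
    fix t :: real assume "t \<noteq> a"
    then have "(\<gamma> t - \<gamma> a) /\<^sub>R (t - a) - v = (\<gamma> t - \<gamma> a - (t - a) *\<^sub>R v) /\<^sub>R (t - a)"
      by (simp add: scaleR_diff_right)
    then show "norm (\<gamma> t - \<gamma> a - (t - a) *\<^sub>R v) / norm (t - a)
      = norm ((\<gamma> t - \<gamma> a) /\<^sub>R (t - a) - v)"
      by (simp add: divide_inverse mult.commute)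
  qed
  ultimately have "((\<lambda>t. norm ((\<gamma> t - \<gamma> a) /\<^sub>R (t - a) - v)) \<longlongrightarrow> 0) (at a)"
    by (rule Lim_transform_eventually)
  then show ?thesis
    by (simp add: tendsto_norm_zero_iff LIM_zero_iff)
qed

lemma tangent_space_iff:
  "v \<in> tangent_space M x \<longleftrightarrow>
     (\<exists>\<gamma>. \<gamma> 0 = x \<and> (\<forall>\<^sub>F t in nhds 0. \<gamma> t \<in> M) \<and> (\<gamma> has_vector_derivative v) (at 0))"
  unfolding tangent_space_def eventually_nhds_metric dist_real_def by auto

lemma vector_derivative_in_subspace:
  fixes c :: "real \<Rightarrow> 'b::euclidean_space"
  assumes "subspace L" "(c has_vector_derivative w) (at 0)" "\<forall>\<^sub>F t in nhds 0. c t \<in> L"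
  shows "w \<in> L"
proof -
  have "\<forall>\<^sub>F t in at 0. (c t - c 0) /\<^sub>R (t - 0) \<in> L"
    using eventually_nhds_conv_at[THEN iffD1, OF assms(3)]
    by (auto elim!: eventually_mono simp: assms(1) subspace_diff subspace_scale)
  then show ?thesis
    using has_vector_derivative_imp_difference_quotient[OF assms(2)]
    by (intro Lim_in_closed_set[OF closed_subspace[OF assms(1)]]) auto
qed

lemma chart_derivative_maps_tangent_space:
  fixes \<phi> :: "'a::euclidean_space \<Rightarrow> 'b::euclidean_space"
  assumes "open U" "x \<in> U" "(\<phi> has_derivative A) (at x)" "\<phi> ` (M \<inter> U) \<subseteq> L" "subspace L"
    and "v \<in> tangent_space M x"
  shows "A v \<in> L"
proof -
  obtain \<gamma> where \<gamma>: "\<gamma> 0 = x" "\<forall>\<^sub>F t in nhds 0. \<gamma> t \<in> M" "(\<gamma> has_vector_derivative v) (at 0)"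
    using assms(6) tangent_space_iff by blast
  have "(\<phi> has_derivative A) (at (\<gamma> 0))"
    using assms(3) \<gamma>(1) by simp
  from diff_chain_at[OF \<gamma>(3)[unfolded has_vector_derivative_def] this]
  have "((\<phi> \<circ> \<gamma>) has_vector_derivative A v) (at 0)"
    using linear_scale[OF has_derivative_linear[OF assms(3)]]
    by (simp add: has_vector_derivative_def o_def)
  moreover have "\<forall>\<^sub>F t in nhds 0. \<gamma> t \<in> U"
    using has_vector_derivative_continuous[OF \<gamma>(3)] \<gamma>(1) assms(1,2)
    by (simp add: isCont_def eventually_nhds_conv_at topological_tendstoD)
  with \<gamma>(2) have "\<forall>\<^sub>F t in nhds 0. (\<phi> \<circ> \<gamma>) t \<in> L"
    by eventually_elim (use assms(4) in auto)
  ultimately show ?thesis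
    by (rule vector_derivative_in_subspace[OF assms(5)])
qed

lemma chart_inverse_derivative_maps_into_tangent_space:
  fixes \<psi> :: "'b::euclidean_space \<Rightarrow> 'a::euclidean_space"
  assumes "open V" "subspace L" "w \<in> L \<inter> V" "\<psi> ` (L \<inter> V) \<subseteq> M" "(\<psi> has_derivative B) (at w)"
    and "l \<in> L"
  shows "B l \<in> tangent_space M (\<psi> w)"
  unfolding tangent_space_iff
proof (intro exI conjI)
  let ?line = "\<lambda>t. w + t *\<^sub>R l"
  have "isCont ?line 0"
    by (intro continuous_intros)
  then have "\<forall>\<^sub>F t in nhds 0. ?line t \<in> V"
    using assms(1,3) by (simp add: isCont_def eventually_nhds_conv_at topological_tendstoD)
  then show "\<forall>\<^sub>F t in nhds 0. (\<psi> \<circ> ?line) t \<in> M"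
    by eventually_elim
      (use assms(2-4,6) in \<open>auto simp: subspace_add subspace_scale\<close>)
  have "(?line has_derivative (\<lambda>t. t *\<^sub>R l)) (at 0)"
    by (auto intro!: derivative_eq_intros)
  moreover have "(\<psi> has_derivative B) (at (?line 0))"
    using assms(5) by simp
  ultimately have "((\<psi> \<circ> ?line) has_derivative B \<circ> (\<lambda>t. t *\<^sub>R l)) (at 0)"
    by (rule diff_chain_at)
  then show "((\<psi> \<circ> ?line) has_vector_derivative B l) (at 0)"
    using linear_scale[OF has_derivative_linear[OF assms(5)]]
    by (simp add: has_vector_derivative_def o_def)
qed simp

lemma tangent_space_eq_chart_image:
  fixes \<phi> :: "'a::euclidean_space \<Rightarrow> 'b::euclidean_space"
  assumes "open U" "open V" "subspace L" "x \<in> M \<inter> U" "\<phi> ` (M \<inter> U) = L \<inter> V"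
    and "\<forall>z\<in>U. \<psi> (\<phi> z) = z"
    and A: "(\<phi> has_derivative A) (at x)" and B: "(\<psi> has_derivative B) (at (\<phi> x))"
  shows "tangent_space M x = B ` L"
proof
  have "((\<psi> \<circ> \<phi>) has_derivative B \<circ> A) (at x)"
    using diff_chain_at[OF A B] .
  then have "(id has_derivative B \<circ> A) (at x)"
    by (rule has_derivative_transform_within_open[OF _ assms(1)]) (use assms(4,6) in auto)
  then have BA: "B (A v) = v" for v
    using has_derivative_unique[OF _ has_derivative_id] by (metis comp_apply id_apply)
  show "tangent_space M x \<subseteq> B ` L"
  proof
    fix v assume "v \<in> tangent_space M x"
    then have "A v \<in> L"
      using chart_derivative_maps_tangent_space[OF assms(1) _ A _ assms(3)] assms(4,5) by blast
    then show "v \<in> B ` L"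
      using BA by (metis image_eqI)
  qed
  have "\<psi> ` (L \<inter> V) \<subseteq> M"
    using assms(5,6) by force
  moreover have "\<phi> x \<in> L \<inter> V" "\<psi> (\<phi> x) = x"
    using assms(4-6) by auto
  ultimately show "B ` L \<subseteq> tangent_space M x"
    using chart_inverse_derivative_maps_into_tangent_space[OF assms(2,3) _ _ B] by auto
qed

lemma subspace_tangent_space:
  fixes M :: "'a::euclidean_space set"
  assumes "C1_submanifold M" "x \<in> M"
  shows "subspace (tangent_space M x)"
proof -
  obtain U V L and \<phi> \<psi> :: "'a \<Rightarrow> 'a" where chart: "open U" "x \<in> U" "open V" "subspace L"
    "C1_on U \<phi>" "C1_on V \<psi>" "\<phi> ` U = V" "\<forall>z\<in>U. \<psi> (\<phi> z) = z" "\<phi> ` (M \<inter> U) = L \<inter> V"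
    using assms unfolding C1_submanifold_def by metis
  obtain A B where A: "(\<phi> has_derivative A) (at x)" and B: "(\<psi> has_derivative B) (at (\<phi> x))"
    using chart(2,5-7) unfolding C1_on_def by blast
  have "tangent_space M x = B ` L"
    using tangent_space_eq_chart_image[OF chart(1,3,4) _ chart(9,8) A B] assms(2) chart(2) by blast
  then show ?thesis
    using linear_subspace_image[OF has_derivative_linear[OF B] chart(4)] by simp
qed

lemma frechet_subgradient_le_curve_derivative:
  fixes f :: "'a::euclidean_space \<Rightarrow> ereal"
  assumes y: "y \<in> frechet_subdiff f x"
    and \<gamma>: "\<gamma> 0 = x" "(\<gamma> has_vector_derivative v) (at 0)"
    and k: "(k has_real_derivative c) (at 0)" "\<forall>\<^sub>F t in nhds 0. f (\<gamma> t) = ereal (k t)"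
  shows "y \<bullet> v \<le> c"
proof -
  let ?q = "\<lambda>t. (\<gamma> t - x) /\<^sub>R t"
  have q: "(?q \<longlongrightarrow> v) (at_right 0)"
    using has_vector_derivative_imp_difference_quotient[OF \<gamma>(2)] \<gamma>(1)
    by (auto intro: tendsto_within_subset)
  have kq: "((\<lambda>t. (k t - k 0) / t) \<longlongrightarrow> c) (at_right 0)"
    using k(1) by (auto simp: has_field_derivative_iff intro: tendsto_within_subset)
  have fx: "f x = ereal (k 0)"
    using k(2) \<gamma>(1) eventually_nhds_x_imp_x by fastforce
  \<comment> \<open>the Frechet inequality at \<open>\<gamma> t\<close>, divided by \<open>t > 0\<close>, in the limit \<open>t \<rightarrow> 0\<^sup>+\<close>\<close>
  have "y \<bullet> v - \<epsilon> * norm v \<le> c" if "\<epsilon> > 0" for \<epsilon>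
  proof (rule tendsto_le[OF _ kq tendsto_diff[OF tendsto_inner[OF tendsto_const q]
          tendsto_mult[OF tendsto_const tendsto_norm[OF q]]]])
    obtain d where "d > 0" and d: "\<And>z. norm (z - x) < d \<Longrightarrow>
        f z \<ge> ereal (real_of_ereal (f x) + y \<bullet> (z - x) - \<epsilon> * norm (z - x))"
      using y \<open>\<epsilon> > 0\<close> unfolding frechet_subdiff_def by blast
    have "\<forall>\<^sub>F t in nhds 0. norm (\<gamma> t - x) < d"
      using has_vector_derivative_continuous[OF \<gamma>(2)] \<gamma>(1) \<open>d > 0\<close>
      by (auto simp: isCont_def tendsto_iff dist_norm eventually_nhds_conv_at)
    then have "\<forall>\<^sub>F t in nhds 0. norm (\<gamma> t - x) < d \<and> f (\<gamma> t) = ereal (k t)"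
      using k(2) by eventually_elim simp
    then have "\<forall>\<^sub>F t in at_right 0. norm (\<gamma> t - x) < d \<and> f (\<gamma> t) = ereal (k t)"
      using filter_leD[OF at_le[OF subset_UNIV]] unfolding eventually_nhds_conv_at by blast
    then have "\<forall>\<^sub>F t in at_right 0. norm (\<gamma> t - x) < d \<and> f (\<gamma> t) = ereal (k t) \<and> t > 0"
      using eventually_at_right_less[of 0] by eventually_elim simp
    then show "\<forall>\<^sub>F t in at_right 0. y \<bullet> ?q t - \<epsilon> * norm (?q t) \<le> (k t - k 0) / t"
    proof eventually_elim
      case (elim t)
      then have "t > 0" "k 0 + y \<bullet> (\<gamma> t - x) - \<epsilon> * norm (\<gamma> t - x) \<le> k t"
        using d[of "\<gamma> t"] fx by simp_all
      then have "(y \<bullet> (\<gamma> t - x) - \<epsilon> * norm (\<gamma> t - x)) / t \<le> (k t - k 0) / t"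
        by (intro divide_right_mono) auto
      moreover have "y \<bullet> ?q t = y \<bullet> (\<gamma> t - x) / t" "norm (?q t) = norm (\<gamma> t - x) / t"
        using \<open>t > 0\<close> by (simp_all add: divide_inverse_commute)
      ultimately show ?case
        by (simp add: diff_divide_distrib)
    qed
  qed simp
  moreover have "((\<lambda>\<epsilon>. y \<bullet> v - \<epsilon> * norm v) \<longlongrightarrow> y \<bullet> v) (at_right 0)"
    by (auto intro!: tendsto_eq_intros)
  ultimately show ?thesis
    using eventually_at_right_less[of "0::real"]
    by (intro tendsto_upperbound[of _ _ "at_right 0"]) (auto elim!: eventually_mono)
qed

lemma frechet_subgradient_le_tangent_derivative:
  fixes f :: "'a::euclidean_space \<Rightarrow> ereal"
  assumes y: "y \<in> frechet_subdiff f x"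
    and h: "open U" "x \<in> U" "\<forall>z\<in>M \<inter> U. f z = ereal (h z)" "(h has_derivative (\<lambda>u. g \<bullet> u)) (at x)"
    and v: "v \<in> tangent_space M x"
  shows "y \<bullet> v \<le> g \<bullet> v"
proof -
  obtain \<gamma> where \<gamma>: "\<gamma> 0 = x" "\<forall>\<^sub>F t in nhds 0. \<gamma> t \<in> M" "(\<gamma> has_vector_derivative v) (at 0)"
    using v tangent_space_iff by blast
  have "(h has_derivative (\<lambda>u. g \<bullet> u)) (at (\<gamma> 0))"
    using h(4) \<gamma>(1) by simp
  from diff_chain_at[OF \<gamma>(3)[unfolded has_vector_derivative_def] this]
  have "((h \<circ> \<gamma>) has_real_derivative g \<bullet> v) (at 0)"
    by (simp add: has_field_derivative_def o_def mult_commute_abs)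
  moreover have "\<forall>\<^sub>F t in nhds 0. \<gamma> t \<in> U"
    using has_vector_derivative_continuous[OF \<gamma>(3)] \<gamma>(1) h(1,2)
    by (simp add: isCont_def eventually_nhds_conv_at topological_tendstoD)
  with \<gamma>(2) have "\<forall>\<^sub>F t in nhds 0. f (\<gamma> t) = ereal ((h \<circ> \<gamma>) t)"
    by eventually_elim (simp add: h(3))
  ultimately show ?thesis
    by (rule frechet_subgradient_le_curve_derivative[OF y \<gamma>(1,3)])
qed

lemma nonneg_inner_on_subspace_imp_orthogonal:
  assumes "subspace T" "\<And>v. v \<in> T \<Longrightarrow> 0 \<le> w \<bullet> v"
  shows "w \<in> orthogonal_comp T"
proof -
  have "v \<bullet> w = 0" if "v \<in> T" for v
    using assms(2)[OF that] assms(2)[OF subspace_neg[OF assms(1) that]]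
    by (simp add: inner_commute)
  then show ?thesis
    unfolding orthogonal_comp_def orthogonal_def by blast
qed

lemma closest_point_subspace_eqI:
  fixes T :: "'a::euclidean_space set"
  assumes "subspace T" "p \<in> T" "a - p \<in> orthogonal_comp T"
  shows "closest_point T a = p"
proof -
  have "dist a p \<le> dist a z" if "z \<in> T" for z
  proof -
    have "orthogonal (a - p) (p - z)"
      using assms subspace_diff[OF assms(1,2) that]
      by (auto simp: orthogonal_comp_def orthogonal_commute)
    then have "(dist a z)\<^sup>2 = (dist a p)\<^sup>2 + (norm (p - z))\<^sup>2"
      using norm_add_Pythagorean[of "a - p" "p - z"] by (simp add: dist_norm)
    then show ?thesis
      by (simp add: power2_le_imp_le)
  qed
  then show ?thesis
    using closest_point_unique[OF subspace_imp_convex closed_subspace] assms(1,2) by metis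
qed

lemma closest_point_subspace_add_orthogonal:
  fixes T :: "'a::euclidean_space set"
  assumes "subspace T" "w \<in> orthogonal_comp T"
  shows "closest_point T (a + w) = closest_point T a"
proof (rule closest_point_subspace_eqI[OF assms(1)])
  let ?p = "closest_point T a"
  show "?p \<in> T"
    using closest_point_in_set[OF closed_subspace] subspace_0 assms(1) by blast
  then have "0 \<le> (?p - a) \<bullet> u" if "u \<in> T" for u
    using closest_point_dot[OF subspace_imp_convex[OF assms(1)] closed_subspace[OF assms(1)],
        of "u + ?p" a]
      that assms(1) by (simp add: subspace_add inner_diff_left)
  then have "a - ?p \<in> orthogonal_comp T"
    using nonneg_inner_on_subspace_imp_orthogonal[OF assms(1), of "?p - a"]
      subspace_neg[OF subspace_orthogonal_comp] by fastforce
  then show "a + w - ?p \<in> orthogonal_comp T"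
    using subspace_add[OF subspace_orthogonal_comp _ assms(2)] by (metis add_diff_eq diff_add_eq)
qed

lemma span_diff_point_eq_par:
  assumes "a \<in> S"
  shows "span ((\<lambda>y. y - a) ` S) = par S"
  unfolding par_def
proof (rule span_eq[THEN iffD2], intro conjI subsetI)
  fix u assume "u \<in> (\<lambda>y. y - a) ` S"
  then show "u \<in> span {y - z |y z. y \<in> S \<and> z \<in> S}"
    using assms by (auto intro: span_base)
next
  fix u assume "u \<in> {y - z |y z. y \<in> S \<and> z \<in> S}"
  then obtain y z where "y \<in> S" "z \<in> S" "u = (y - a) - (z - a)"
    by auto
  then show "u \<in> span ((\<lambda>y. y - a) ` S)"
    by (metis span_diff span_base image_eqI)
qed

lemma Usp_eq_tangent_space:
  assumes "partly_smooth_at f M x" "C1_submanifold M"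
  shows "Usp f x = tangent_space M x"
proof -
  have "limiting_subdiff f x \<noteq> {}" and "par (limiting_subdiff f x) = normal_space M x"
    using assms(1) unfolding partly_smooth_at_def by auto
  then have "Vsp f x = orthogonal_comp (tangent_space M x)"
    unfolding Vsp_def normal_space_def by (simp add: span_diff_point_eq_par some_in_eq)
  moreover have "subspace (tangent_space M x)"
    using subspace_tangent_space[OF assms(2)] assms(1) unfolding partly_smooth_at_def by blast
  ultimately show ?thesis
    by (simp add: Usp_def orthogonal_comp_self)
qed

lemma riemannian_gradient_eq_U_gradient:
  assumes "partly_smooth_at f M x" "C1_submanifold M" "riemannian_gradient_via f M x U h gr"
  shows "gr = U_gradient f x"
proof -
  define T where "T = tangent_space M x"
  define y where "y = (SOME y. y \<in> limiting_subdiff f x)"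
  obtain g where h: "open U" "x \<in> U" "\<forall>z\<in>M \<inter> U. f z = ereal (h z)"
      "(h has_derivative (\<lambda>u. g \<bullet> u)) (at x)"
    and gr: "gr = closest_point T g"
    using assms(3) unfolding riemannian_gradient_via_def T_def by blast
  have "x \<in> M" and reg: "frechet_subdiff f x = limiting_subdiff f x" "limiting_subdiff f x \<noteq> {}"
    using assms(1) unfolding partly_smooth_at_def by auto
  have T: "subspace T" "Usp f x = T"
    unfolding T_def using subspace_tangent_space[OF assms(2) \<open>x \<in> M\<close>]
      Usp_eq_tangent_space[OF assms(1,2)] by simp_all
  have y: "y \<in> frechet_subdiff f x"
    using reg unfolding y_def by (simp add: some_in_eq)
  have "y \<bullet> v \<le> g \<bullet> v" if "v \<in> T" for v
    using frechet_subgradient_le_tangent_derivative[OF y h] that unfolding T_def .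
  then have "g - y \<in> orthogonal_comp T"
    by (intro nonneg_inner_on_subspace_imp_orthogonal[OF T(1)]) (simp add: inner_diff_left)
  then have "closest_point T g = closest_point T y"
    using closest_point_subspace_add_orthogonal[OF T(1), of "g - y" y] by simp
  then show ?thesis
    unfolding gr U_gradient_def T(2) y_def .
qed

theorem proposition4:
  fixes f :: "'a::euclidean_space \<Rightarrow> ereal" and M :: "'a set" and xbar :: 'a
  assumes "proper_fun f" and "closed_fun f" and "convex_fun f"
    and "C1_submanifold M" and "xbar \<in> M"
    and "C1_partly_smooth_around f M xbar"
    and "U_gradient f xbar \<in> rel_interior (limiting_subdiff f xbar)"
  shows "\<exists>W. open W \<and> xbar \<in> W \<and>
           (\<forall>x\<in>M \<inter> W. \<forall>U h gr. riemannian_gradient_via f M x U h gr \<longrightarrow>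
               gr = U_gradient f x)"
proof -
  obtain W where W: "open W" "xbar \<in> W" "\<forall>x\<in>M \<inter> W. partly_smooth_at f M x"
    using assms(6) unfolding C1_partly_smooth_around_def by blast
  show ?thesis
  proof (intro exI[of _ W] conjI ballI allI impI)
    fix x U h gr
    assume "x \<in> M \<inter> W" "riemannian_gradient_via f M x U h gr"
    then show "gr = U_gradient f x"
      using riemannian_gradient_eq_U_gradient[OF _ assms(4)] W(3) by blast
  qed (use W in auto)
qed

end
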